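(* Let $SP_t(k)$ denote the smallest $n$ such that $PPL_t(n)=k$. Then $SP_t(1)=1$, $SP_t(2)=2$, $SP_t(3)=6$, and for all $k>0$, \[SP_t(k+3)=16\,SP_t(k)-6.\]
   Context: The Thue-Morse word $t=t[1]t[2]\cdots=abbabaabbaababba\cdots$ is the fixed point starting with $a$ of the morphism $a\mapsto abba,\ b\mapsto baab$. A palindrome is a word $p=p[1]\cdots p[n]$ with $p[i]=p[n-i+1]$ for all $i$. $PPL_t(n)$ is the minimal number of nonempty palindromes whose concatenation equals the prefix of $t$ of length $n$. *)

theory Defs
  imports Main
begin

datatype letter = a | b

fun tm_img :: "letter \<Rightarrow> letter list" where
  "tm_img a = [a, b, b, a]"
| "tm_img b = [b, a, a, b]"

definition tm_morph :: "letter list \<Rightarrow> letter list" where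
  "tm_morph w = concat (map tm_img w)"

text \<open>Prefix of length n of the fixed point t starting with a:
  (tm_morph ^^ n) [a] has length 4^n >= n and is a prefix of t.\<close>
definition tm_prefix :: "nat \<Rightarrow> letter list" where
  "tm_prefix n = take n ((tm_morph ^^ n) [a])"

definition palindrome :: "'x list \<Rightarrow> bool" where
  "palindrome p \<longleftrightarrow> rev p = p"

definition pal_length :: "'x list \<Rightarrow> nat" where
  "pal_length w = (LEAST k. \<exists>ps. length ps = k \<and> concat ps = w \<and>
                      (\<forall>p\<in>set ps. p \<noteq> [] \<and> palindrome p))"

definition PPL_t :: "nat \<Rightarrow> nat" where
  "PPL_t n = pal_length (tm_prefix n)"

definition SP_t :: "nat \<Rightarrow> nat" where
  "SP_t k = (LEAST n. PPL_t n = k)"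

end

theory Submission
  imports Defs
begin

text \<open>A palindromic factor t[s..N) of t has length 1 or 3, or even length with 4 dividing s + N;
  in the last case it is, up to trimming at most 3 letters at each end, the image under the
  morphism of a palindromic factor of t. Lifting and desubstituting decompositions therefore gives
  PPL_t N = min over m of PPL_t m + |N - 4m|, hence the recurrence
  PPL_t (4n + r) = min (PPL_t n + r) (PPL_t (n + 1) + 4 - r) for r < 4. If n = SP_t k, two
  applications of the recurrence give PPL_t (16n - 6) = k + 3, while two levels of the minimum
  formula keep PPL_t below k + 3 on all shorter prefixes.\<close>

fun flip :: "letter \<Rightarrow> letter" where
  "flip a = b"
| "flip b = a"

lemma flip_neq [simp]: "flip x \<noteq> x" "x \<noteq> flip x"
  by (cases x; simp)+

lemma flip_flip [simp]: "flip (flip x) = x"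
  by (cases x) simp_all

lemma flip_eq_iff [simp]: "flip x = flip y \<longleftrightarrow> x = y"
  by (cases x; cases y) simp_all

text \<open>Indices start at 0: thue_morse n is the letter t[n + 1].\<close>

fun thue_morse :: "nat \<Rightarrow> letter" where
  "thue_morse n =
     (if n = 0 then a else if even n then thue_morse (n div 2) else flip (thue_morse (n div 2)))"

declare thue_morse.simps [simp del]

lemma thue_morse_0 [simp]: "thue_morse 0 = a"
  by (simp add: thue_morse.simps)

lemma thue_morse_even: "thue_morse (2 * n) = thue_morse n"
  by (cases "n = 0") (simp_all add: thue_morse.simps)

lemma thue_morse_odd: "thue_morse (2 * n + 1) = flip (thue_morse n)"
  by (simp add: thue_morse.simps)

lemma thue_morse_4_mult:
  "thue_morse (4 * n) = thue_morse n" "thue_morse (4 * n + 1) = flip (thue_morse n)"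
  "thue_morse (4 * n + 2) = flip (thue_morse n)" "thue_morse (4 * n + 3) = thue_morse n"
proof -
  have "4 * n = 2 * (2 * n)" "4 * n + 1 = 2 * (2 * n) + 1"
    "4 * n + 2 = 2 * (2 * n + 1)" "4 * n + 3 = 2 * (2 * n + 1) + 1"
    by simp_all
  then show "thue_morse (4 * n) = thue_morse n" "thue_morse (4 * n + 1) = flip (thue_morse n)"
    "thue_morse (4 * n + 2) = flip (thue_morse n)" "thue_morse (4 * n + 3) = thue_morse n"
    by (simp_all only: thue_morse_even thue_morse_odd flip_flip)
qed

lemma thue_morse_4_mult_plus:
  assumes "r < 4"
  shows "thue_morse (4 * n + r) = (if r = 1 \<or> r = 2 then flip (thue_morse n) else thue_morse n)"
proof -
  have "r = 0 \<or> r = 1 \<or> r = 2 \<or> r = 3"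
    using assms by arith
  then show ?thesis
    using thue_morse_4_mult[of n] by auto
qed

lemma tm_img_thue_morse: "tm_img (thue_morse n) = map thue_morse [4 * n..<4 * n + 4]"
proof -
  have "[4 * n..<4 * n + 4] = [4 * n, 4 * n + 1, 4 * n + 2, 4 * n + 3]"
    by (simp add: upt_rec)
  then show ?thesis
    using thue_morse_4_mult[of n] by (cases "thue_morse n") simp_all
qed

lemma tm_morph_thue_morse: "tm_morph (map thue_morse [0..<n]) = map thue_morse [0..<4 * n]"
proof (induction n)
  case 0
  then show ?case
    by (simp add: tm_morph_def)
next
  case (Suc n)
  have "[0..<4 * Suc n] = [0..<4 * n] @ [4 * n..<4 * n + 4]"
    using upt_add_eq_append[of 0 "4 * n" 4] by (simp add: add.commute)
  with Suc show ?case
    by (simp add: tm_morph_def tm_img_thue_morse)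
qed

lemma tm_prefix_eq: "tm_prefix n = map thue_morse [0..<n]"
proof -
  have "n < 2 ^ n"
    by (rule less_exp)
  also have "(2::nat) ^ n \<le> 4 ^ n"
    by (simp add: power_mono)
  finally have "n \<le> 4 ^ n"
    by simp
  moreover have "(tm_morph ^^ k) [a] = map thue_morse [0..<4 ^ k]" for k
    by (induction k) (simp_all add: tm_morph_thue_morse)
  ultimately show ?thesis
    by (simp add: tm_prefix_def take_map)
qed

lemma thue_morse_no_letter_cube:
  "\<not> (thue_morse n = thue_morse (n + 1) \<and> thue_morse (n + 1) = thue_morse (n + 2))"
proof (cases "even n")
  case True
  then obtain q where "n = 2 * q"
    by blast
  then show ?thesis
    using thue_morse_odd[of q] thue_morse_even[of q] by simp
next
  case False
  then obtain q where "n = 2 * q + 1"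
    by (metis oddE)
  then have "n + 1 = 2 * (q + 1)" "n + 2 = 2 * (q + 1) + 1"
    by simp_all
  then show ?thesis
    using thue_morse_odd[of "q + 1"] thue_morse_even[of "q + 1"] by simp
qed

lemma pal_length_le:
  assumes "concat ps = w" "\<forall>p\<in>set ps. p \<noteq> [] \<and> palindrome p"
  shows "pal_length w \<le> length ps"
  unfolding pal_length_def by (rule Least_le) (use assms in blast)

lemma pal_length_witness:
  "\<exists>ps. length ps = pal_length w \<and> concat ps = w \<and> (\<forall>p\<in>set ps. p \<noteq> [] \<and> palindrome p)"
proof -
  have "\<exists>ps. length ps = length w \<and> concat ps = w \<and> (\<forall>p\<in>set ps. p \<noteq> [] \<and> palindrome p)"
    by (rule exI[of _ "map (\<lambda>x. [x]) w"]) (auto simp: palindrome_def)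
  then show ?thesis
    unfolding pal_length_def by (rule LeastI)
qed

lemma pal_length_Nil [simp]: "pal_length [] = 0"
  using pal_length_le[of "[]" "[]"] by simp

lemma pal_length_append_palindrome:
  assumes "palindrome v" "v \<noteq> []"
  shows "pal_length (u @ v) \<le> pal_length u + 1"
proof -
  obtain ps where "length ps = pal_length u" "concat ps = u" "\<forall>p\<in>set ps. p \<noteq> [] \<and> palindrome p"
    using pal_length_witness by blast
  then show ?thesis
    using pal_length_le[of "ps @ [v]" "u @ v"] assms by auto
qed

lemma pal_length_last_palindrome:
  assumes "w \<noteq> []"
  shows "\<exists>u v. w = u @ v \<and> v \<noteq> [] \<and> palindrome v \<and> pal_length u + 1 \<le> pal_length w"
proof -
  obtain ps where ps: "length ps = pal_length w" "concat ps = w"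
    "\<forall>p\<in>set ps. p \<noteq> [] \<and> palindrome p"
    using pal_length_witness by blast
  with assms obtain qs v where qs: "ps = qs @ [v]"
    by (metis concat.simps(1) rev_exhaust)
  have "pal_length (concat qs) \<le> length qs"
    using ps(3) qs by (intro pal_length_le) auto
  moreover have "w = concat qs @ v" "v \<noteq> []" "palindrome v" "length ps = length qs + 1"
    using ps qs by auto
  ultimately show ?thesis
    using ps(1) by (intro exI[of _ "concat qs"] exI[of _ v]) simp
qed

definition pal_factor :: "(nat \<Rightarrow> 'a) \<Rightarrow> nat \<Rightarrow> nat \<Rightarrow> bool" where
  "pal_factor g s N \<longleftrightarrow> (\<forall>i j. s \<le> i \<longrightarrow> i < N \<longrightarrow> i + j = s + N - 1 \<longrightarrow> g i = g j)"

lemma pal_factorD: "pal_factor g s N \<Longrightarrow> s \<le> i \<Longrightarrow> i < N \<Longrightarrow> i + j = s + N - 1 \<Longrightarrow> g i = g j"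
  by (simp add: pal_factor_def)

lemma palindrome_map_upt_iff:
  assumes "s \<le> N"
  shows "palindrome (map g [s..<N]) \<longleftrightarrow> pal_factor g s N"
proof -
  have "palindrome (map g [s..<N]) \<longleftrightarrow> (\<forall>k<N - s. g (s + k) = g (N - 1 - k))"
    unfolding palindrome_def by (auto simp: list_eq_iff_nth_eq rev_nth)
  also have "\<dots> \<longleftrightarrow> pal_factor g s N"
    unfolding pal_factor_def
  proof (intro iffI allI impI)
    fix i j
    assume sym: "\<forall>k<N - s. g (s + k) = g (N - 1 - k)"
      and ij: "s \<le> i" "i < N" "i + j = s + N - 1"
    have "i - s < N - s"
      using ij by linarith
    then have "g (s + (i - s)) = g (N - 1 - (i - s))"
      using sym by blast
    moreover have "s + (i - s) = i" "N - 1 - (i - s) = j"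
      using ij by linarith+
    ultimately show "g i = g j"
      by simp
  next
    fix k
    assume "\<forall>i j. s \<le> i \<longrightarrow> i < N \<longrightarrow> i + j = s + N - 1 \<longrightarrow> g i = g j" "k < N - s"
    moreover have "s \<le> s + k" "s + k < N" "s + k + (N - 1 - k) = s + N - 1"
      using \<open>k < N - s\<close> by linarith+
    ultimately show "g (s + k) = g (N - 1 - k)"
      by blast
  qed
  finally show ?thesis .
qed

lemma pal_factor_singleton: "pal_factor g N (N + 1)"
  unfolding pal_factor_def
proof (intro allI impI)
  fix i j
  assume "N \<le> i" "i < N + 1" "i + j = N + (N + 1) - 1"
  then have "i = N" "j = N"
    by linarith+
  then show "g i = g j"
    by simp
qed

lemma pal_factor_inner: "pal_factor g s (N + 1) \<Longrightarrow> pal_factor g (s + 1) N"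
  unfolding pal_factor_def
proof (intro allI impI)
  fix i j
  assume "\<forall>i j. s \<le> i \<longrightarrow> i < N + 1 \<longrightarrow> i + j = s + (N + 1) - 1 \<longrightarrow> g i = g j"
    and "s + 1 \<le> i" "i < N" "i + j = s + 1 + N - 1"
  then show "g i = g j"
    by auto
qed

definition prefix_pal_length :: "(nat \<Rightarrow> 'a) \<Rightarrow> nat \<Rightarrow> nat" where
  "prefix_pal_length g n = pal_length (map g [0..<n])"

lemma map_upt_split: "s \<le> N \<Longrightarrow> map g [0..<N] = map g [0..<s] @ map g [s..<N]"
  by (metis le_add_diff_inverse map_append upt_add_eq_append zero_le)

lemma prefix_pal_length_0 [simp]: "prefix_pal_length g 0 = 0"
  by (simp add: prefix_pal_length_def)

lemma prefix_pal_length_pal_factor: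
  assumes "s < N" "pal_factor g s N"
  shows "prefix_pal_length g N \<le> prefix_pal_length g s + 1"
  using assms map_upt_split[of s N g] palindrome_map_upt_iff[of s N g]
    pal_length_append_palindrome[of "map g [s..<N]" "map g [0..<s]"]
  by (simp add: prefix_pal_length_def)

lemma prefix_pal_length_last_pal_factor:
  assumes "0 < N"
  shows "\<exists>s<N. pal_factor g s N \<and> prefix_pal_length g s + 1 \<le> prefix_pal_length g N"
proof -
  obtain u v where uv: "map g [0..<N] = u @ v" "v \<noteq> []" "palindrome v"
    "pal_length u + 1 \<le> prefix_pal_length g N"
    using assms pal_length_last_palindrome[of "map g [0..<N]"]
    unfolding prefix_pal_length_def by auto
  define s where "s = length u"
  have "length u + length v = N"
    using arg_cong[OF uv(1), of length] by simp
  then have "s < N"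
    using uv(2) unfolding s_def by (cases v) auto
  then have "map g [0..<s] @ map g [s..<N] = u @ v"
    using uv(1) map_upt_split[of s N g] by simp
  moreover have "length (map g [0..<s]) = length u"
    by (simp add: s_def)
  ultimately have "u = map g [0..<s]" "v = map g [s..<N]"
    by simp_all
  then show ?thesis
    using \<open>s < N\<close> uv palindrome_map_upt_iff[of s N g] by (auto simp: prefix_pal_length_def)
qed

lemma prefix_pal_length_Suc_le: "prefix_pal_length g (N + 1) \<le> prefix_pal_length g N + 1"
  using prefix_pal_length_pal_factor[OF _ pal_factor_singleton] by simp

lemma prefix_pal_length_le_Suc: "prefix_pal_length g N \<le> prefix_pal_length g (N + 1) + 1"
proof -
  obtain s where s: "s < N + 1" "pal_factor g s (N + 1)"
      "prefix_pal_length g s + 1 \<le> prefix_pal_length g (N + 1)"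
    using prefix_pal_length_last_pal_factor[of "N + 1" g] by auto
  consider "s = N" | "s + 1 = N" | "s + 1 < N"
    using s(1) by linarith
  then show ?thesis
  proof cases
    case 1
    then show ?thesis
      using s by simp
  next
    case 2
    then show ?thesis
      using s prefix_pal_length_Suc_le[of g s] by simp
  next
    case 3
    then have "prefix_pal_length g N \<le> prefix_pal_length g (s + 1) + 1"
      using pal_factor_inner[OF s(2)] by (intro prefix_pal_length_pal_factor)
    then show ?thesis
      using s prefix_pal_length_Suc_le[of g s] by simp
  qed
qed

lemma prefix_pal_length_lipschitz:
  "int (prefix_pal_length g M) \<le> int (prefix_pal_length g N) + \<bar>int M - int N\<bar>"
proof -
  have up: "prefix_pal_length g (N + d) \<le> prefix_pal_length g N + d" for N d
  proof (induction d)
    case (Suc d)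
    then show ?case
      using prefix_pal_length_Suc_le[of g "N + d"] by simp
  qed simp
  have down: "prefix_pal_length g N \<le> prefix_pal_length g (N + d) + d" for N d
  proof (induction d)
    case (Suc d)
    then show ?case
      using prefix_pal_length_le_Suc[of g "N + d"] by simp
  qed simp
  show ?thesis
    using up[of N "M - N"] down[of M "N - M"] by (cases "N \<le> M") simp_all
qed

lemma PPL_t_eq: "PPL_t = prefix_pal_length thue_morse"
  by (simp add: fun_eq_iff PPL_t_def prefix_pal_length_def tm_prefix_eq)

lemmas PPL_t_0 = prefix_pal_length_0[where g = thue_morse, folded PPL_t_eq]
lemmas PPL_t_pal_factor = prefix_pal_length_pal_factor[where g = thue_morse, folded PPL_t_eq]
lemmas PPL_t_last_pal_factor = prefix_pal_length_last_pal_factor[where g = thue_morse, folded PPL_t_eq]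
lemmas PPL_t_Suc_le = prefix_pal_length_Suc_le[where g = thue_morse, folded PPL_t_eq]
lemmas PPL_t_lipschitz = prefix_pal_length_lipschitz[where g = thue_morse, folded PPL_t_eq]

lemma pal_factor_thue_morse_4_mult:
  assumes "pal_factor thue_morse s N"
  shows "pal_factor thue_morse (4 * s) (4 * N)"
  unfolding pal_factor_def
proof (intro allI impI)
  fix i j
  assume ij: "4 * s \<le> i" "i < 4 * N" "i + j = 4 * s + 4 * N - 1"
  define q r where "q = i div 4" and "r = i mod 4"
  have i: "i = 4 * q + r" and r: "r < 4"
    unfolding q_def r_def by auto
  have "s \<le> q" "q < N"
    using ij i r by linarith+
  then have "thue_morse q = thue_morse (s + N - 1 - q)"
    by (intro pal_factorD[OF assms]) simp_all
  moreover have "j = 4 * (s + N - 1 - q) + (3 - r)"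
    using ij i r \<open>q < N\<close> by simp
  ultimately show "thue_morse i = thue_morse j"
    using i r thue_morse_4_mult_plus[OF r, of q] thue_morse_4_mult_plus[of "3 - r" "s + N - 1 - q"]
    by auto
qed

lemma PPL_t_4_mult_le: "PPL_t (4 * n) \<le> PPL_t n"
proof (induction n rule: less_induct)
  case (less n)
  show ?case
  proof (cases "n = 0")
    case False
    then obtain s where s: "s < n" "pal_factor thue_morse s n" "PPL_t s + 1 \<le> PPL_t n"
      using PPL_t_last_pal_factor by blast
    have "PPL_t (4 * n) \<le> PPL_t (4 * s) + 1"
      using s(1) pal_factor_thue_morse_4_mult[OF s(2)] by (intro PPL_t_pal_factor) simp_all
    also have "\<dots> \<le> PPL_t s + 1"
      using less s(1) by simp
    finally show ?thesis
      using s(3) by simp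
  qed simp
qed

lemma pal_factor_thue_morse_even_length:
  assumes pal: "pal_factor thue_morse s N" and "s < N" "even (N - s)"
  shows "4 dvd s + N"
proof -
  have "s + N = (N - s) + 2 * s"
    using assms(2) by simp
  then obtain c where c: "s + N = 2 * c"
    using assms(3) by (metis dvd_add_left_iff dvd_triv_left dvdE)
  have "thue_morse (c - 1) = thue_morse c"
    using c assms(2) by (intro pal_factorD[OF pal]) linarith+
  have "even c"
  proof (rule ccontr)
    assume "odd c"
    then obtain q where "c = 2 * q + 1"
      by (metis oddE)
    then show False
      using \<open>thue_morse (c - 1) = thue_morse c\<close> thue_morse_odd[of q] thue_morse_even[of q] by simp
  qed
  then show ?thesis
    using c by auto
qed

lemma pal_factor_thue_morse_odd_length:
  assumes pal: "pal_factor thue_morse s N" and "odd (N - s)"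
  shows "N - s \<le> 3"
proof (rule ccontr)
  assume "\<not> N - s \<le> 3"
  with assms(2) have "N - s \<ge> 5"
    by presburger
  moreover have "s + N = (N - s) + 2 * s"
    using \<open>N - s \<ge> 5\<close> by simp
  ultimately have "odd (s + N)"
    using assms(2) by simp
  then obtain p where "s + N = 2 * p + 1"
    by (metis oddE)
  with \<open>N - s \<ge> 5\<close> have p: "s + N = 2 * p + 1" "s + 2 \<le> p" "p + 2 < N"
    by linarith+
  have e2: "thue_morse (p - 2) = thue_morse (p + 2)" and e1: "thue_morse (p - 1) = thue_morse (p + 1)"
    using p by (intro pal_factorD[OF pal]; linarith)+
  have "(\<exists>q. p = 2 * q + 2) \<or> (\<exists>q. p = 2 * q + 3)"
    using p(2) by presburger
  then consider q where "p = 2 * q + 2" | q where "p = 2 * q + 3"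
    by blast
  then show False
  proof cases
    case 1
    then have pq: "p - 2 = 2 * q" "p - 1 = 2 * q + 1" "p + 1 = 2 * (q + 1) + 1" "p + 2 = 2 * (q + 2)"
      by simp_all
    have "thue_morse (p - 2) = thue_morse q" "thue_morse (p - 1) = flip (thue_morse q)"
      "thue_morse (p + 1) = flip (thue_morse (q + 1))" "thue_morse (p + 2) = thue_morse (q + 2)"
      unfolding pq by (rule thue_morse_even thue_morse_odd)+
    then show False
      using e1 e2 thue_morse_no_letter_cube[of q] by simp
  next
    case 2
    then have pq: "p - 2 = 2 * q + 1" "p - 1 = 2 * (q + 1)" "p + 1 = 2 * (q + 2)"
      "p + 2 = 2 * (q + 2) + 1"
      by simp_all
    have "thue_morse (p - 2) = flip (thue_morse q)" "thue_morse (p - 1) = thue_morse (q + 1)"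
      "thue_morse (p + 1) = thue_morse (q + 2)" "thue_morse (p + 2) = flip (thue_morse (q + 2))"
      unfolding pq by (rule thue_morse_even thue_morse_odd)+
    then show False
      using e1 e2 thue_morse_no_letter_cube[of q] by simp
  qed
qed

lemma pal_factor_thue_morse_length_3:
  assumes pal: "pal_factor thue_morse s (s + 3)"
  shows "\<not> 4 dvd s"
proof
  assume "4 dvd s"
  then obtain j where "s = 4 * j"
    by blast
  moreover have "thue_morse s = thue_morse (s + 2)"
    by (rule pal_factorD[OF pal]) simp_all
  ultimately show False
    using thue_morse_4_mult(1,3)[of j] by simp
qed

text \<open>Desubstitution: the palindrome t[s..N) with s + N = 4c is, up to trimming its ends, the
  image under the morphism of t[x..c - x).\<close>

lemma pal_factor_thue_morse_desubst:
  assumes pal: "pal_factor thue_morse s N" and c: "s + N = 4 * c"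
    and x: "s \<le> 4 * x + 3" "2 * x < c"
  shows "pal_factor thue_morse x (c - x)"
proof -
  have lift: "thue_morse i = thue_morse j" if "x \<le> i" "x < j" "i + j = c - 1" for i j
  proof -
    have "thue_morse (4 * i + 3) = thue_morse (4 * j)"
      using that c x by (intro pal_factorD[OF pal]) linarith+
    then show ?thesis
      using thue_morse_4_mult(1,4) by simp
  qed
  show ?thesis
    unfolding pal_factor_def
  proof (intro allI impI)
    fix i j
    assume "x \<le> i" "i < c - x" "i + j = x + (c - x) - 1"
    then consider "x \<le> i" "x < j" "i + j = c - 1" | "x \<le> j" "x < i" "i + j = c - 1" | "i = j"
      using x by linarith
    then show "thue_morse i = thue_morse j"
    proof cases
      case 1
      then show ?thesis
        by (rule lift)
    next
      case 2
      then show ?thesis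
        using lift[of j i] by (simp add: add.commute)
    qed simp
  qed
qed

text \<open>The length of the decomposition of the prefix of length N obtained from an optimal one of
  the prefix of length m by applying the morphism and then adding or removing single letters.\<close>

definition lifted_PPL :: "nat \<Rightarrow> nat \<Rightarrow> int" where
  "lifted_PPL m N = int (PPL_t m) + \<bar>int N - 4 * int m\<bar>"

lemma PPL_t_le_lifted_PPL: "int (PPL_t N) \<le> lifted_PPL m N"
  using PPL_t_lipschitz[of N "4 * m"] PPL_t_4_mult_le[of m] by (simp add: lifted_PPL_def)

lemma lifted_PPL_step_length_3:
  assumes "\<not> 4 dvd s"
  shows "\<exists>m'. lifted_PPL m' (s + 3) \<le> lifted_PPL m s + 1"
proof (cases "4 * m \<le> s")
  case True
  with assms have "4 * m + 1 \<le> s"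
    by (metis dvd_triv_left le_antisym not_less_eq_eq Suc_eq_plus1)
  then show ?thesis
    using PPL_t_Suc_le[of m] by (intro exI[of _ "m + 1"]) (simp add: lifted_PPL_def)
next
  case False
  then show ?thesis
    by (intro exI[of _ m]) (simp add: lifted_PPL_def)
qed

lemma lifted_PPL_step_even:
  assumes pal: "pal_factor thue_morse s N" and "s < N" and c: "s + N = 4 * c"
  shows "\<exists>m'. lifted_PPL m' N \<le> lifted_PPL m s + 1"
proof (cases "c \<le> 2 * m")
  case True
  then have "int N - 4 * int m \<le> 4 * int m - int s" "4 * int m - int N \<le> 4 * int m - int s"
    using c \<open>s < N\<close> by linarith+
  then have "\<bar>int N - 4 * int m\<bar> \<le> \<bar>int s - 4 * int m\<bar>"
    by linarith
  then show ?thesis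
    by (intro exI[of _ m]) (simp add: lifted_PPL_def)
next
  case False
  obtain x where x: "m \<le> x" "s \<le> 4 * x + 3" "2 * x < c"
    and shift: "\<bar>int x - int m\<bar> + \<bar>4 * int x - int s\<bar> \<le> \<bar>int s - 4 * int m\<bar>"
  proof (cases "s div 4 \<le> m")
    case True
    then show ?thesis
      using False by (intro that[of m]) linarith+
  next
    case le: False
    have "4 * (s div 4) \<le> s" "s \<le> 4 * (s div 4) + 3"
      by simp_all
    then show ?thesis
      using le c \<open>s < N\<close> by (intro that[of "s div 4"]) linarith+
  qed
  have "x < c - x"
    using x by linarith
  then have "int (PPL_t (c - x)) \<le> int (PPL_t x) + 1"
    using PPL_t_pal_factor[OF _ pal_factor_thue_morse_desubst[OF pal c x(2,3)]] by simp
  moreover have "int (PPL_t x) \<le> int (PPL_t m) + \<bar>int x - int m\<bar>"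
    by (rule PPL_t_lipschitz)
  moreover have "int N - 4 * int (c - x) = 4 * int x - int s"
    using c x by simp
  ultimately show ?thesis
    using shift by (intro exI[of _ "c - x"]) (simp add: lifted_PPL_def)
qed

lemma lifted_PPL_step:
  assumes pal: "pal_factor thue_morse s N" and "s < N"
  shows "\<exists>m'. lifted_PPL m' N \<le> lifted_PPL m s + 1"
proof -
  have "odd (N - s) \<longrightarrow> N - s \<le> 3"
    using pal_factor_thue_morse_odd_length[OF pal] by blast
  then have "N = s + 1 \<or> N = s + 3 \<or> even (N - s)"
    using \<open>s < N\<close> by presburger
  then consider "N = s + 1" | "N = s + 3" | "even (N - s)"
    by blast
  then show ?thesis
  proof cases
    case 1
    then show ?thesis
      by (intro exI[of _ m]) (simp add: lifted_PPL_def)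
  next
    case 2
    then show ?thesis
      using lifted_PPL_step_length_3 pal_factor_thue_morse_length_3 pal by blast
  next
    case 3
    then obtain c where "s + N = 4 * c"
      using pal_factor_thue_morse_even_length[OF pal \<open>s < N\<close>] by blast
    then show ?thesis
      using lifted_PPL_step_even[OF pal \<open>s < N\<close>] by blast
  qed
qed

lemma PPL_t_eq_lifted_PPL: "\<exists>m. lifted_PPL m N = int (PPL_t N)"
proof -
  have "\<exists>m. lifted_PPL m N \<le> int (PPL_t N)"
  proof (induction N rule: less_induct)
    case (less N)
    show ?case
    proof (cases "N = 0")
      case True
      then show ?thesis
        by (intro exI[of _ 0]) (simp add: lifted_PPL_def PPL_t_0)
    next
      case False
      then obtain s where s: "s < N" "pal_factor thue_morse s N" "PPL_t s + 1 \<le> PPL_t N"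
        using PPL_t_last_pal_factor by blast
      obtain m where "lifted_PPL m s \<le> int (PPL_t s)"
        using less s(1) by blast
      moreover obtain m' where "lifted_PPL m' N \<le> lifted_PPL m s + 1"
        using lifted_PPL_step[OF s(2,1)] by blast
      ultimately show ?thesis
        using s(3) by (intro exI[of _ m']) linarith
    qed
  qed
  then show ?thesis
    using PPL_t_le_lifted_PPL by (meson order_antisym)
qed

lemma PPL_t_4_mult_plus:
  assumes "r < 4"
  shows "PPL_t (4 * n + r) = min (PPL_t n + r) (PPL_t (n + 1) + 4 - r)"
proof -
  obtain m where m: "lifted_PPL m (4 * n + r) = int (PPL_t (4 * n + r))"
    using PPL_t_eq_lifted_PPL by blast
  have "int (PPL_t n) + int r \<le> int (PPL_t (4 * n + r))
      \<or> int (PPL_t (n + 1)) + 4 - int r \<le> int (PPL_t (4 * n + r))"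
  proof (cases "m \<le> n")
    case True
    then have "\<bar>int (4 * n + r) - 4 * int m\<bar> = int (4 * n + r) - 4 * int m"
      by simp
    then show ?thesis
      using True m PPL_t_lipschitz[of n m] unfolding lifted_PPL_def by linarith
  next
    case False
    then have "\<bar>int (4 * n + r) - 4 * int m\<bar> = 4 * int m - int (4 * n + r)"
      using assms by simp
    then show ?thesis
      using False m PPL_t_lipschitz[of "n + 1" m] unfolding lifted_PPL_def by linarith
  qed
  moreover have "int (PPL_t (4 * n + r)) \<le> int (PPL_t n) + int r"
    using PPL_t_le_lifted_PPL[of "4 * n + r" n] by (simp add: lifted_PPL_def)
  moreover have "int (PPL_t (4 * n + r)) \<le> int (PPL_t (n + 1)) + 4 - int r"
    using PPL_t_le_lifted_PPL[of "4 * n + r" "n + 1"] assms by (simp add: lifted_PPL_def)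
  ultimately show ?thesis
    using assms by linarith
qed

lemma PPL_t_two_levels:
  assumes "\<bar>int j - 16 * int i\<bar> \<le> 9"
  shows "PPL_t j \<le> PPL_t i + 3"
proof -
  have "\<exists>m. \<bar>int j - 4 * int m\<bar> + \<bar>int m - 4 * int i\<bar> \<le> 3"
  proof -
    consider "int j - 16 * int i \<le> -7"
      | "-6 \<le> int j - 16 * int i" "int j - 16 * int i \<le> -3"
      | "-2 \<le> int j - 16 * int i" "int j - 16 * int i \<le> 2"
      | "3 \<le> int j - 16 * int i" "int j - 16 * int i \<le> 6"
      | "7 \<le> int j - 16 * int i"
      by linarith
    then show ?thesis
    proof cases
      case 1
      then have "i \<ge> 1"
        by linarith
      then show ?thesis
        using 1 assms by (intro exI[of _ "4 * i - 2"]) simp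
    next
      case 2
      then have "i \<ge> 1"
        by linarith
      then show ?thesis
        using 2 by (intro exI[of _ "4 * i - 1"]) simp
    next
      case 3
      then show ?thesis
        by (intro exI[of _ "4 * i"]) simp
    next
      case 4
      then show ?thesis
        by (intro exI[of _ "4 * i + 1"]) simp
    next
      case 5
      then show ?thesis
        using assms by (intro exI[of _ "4 * i + 2"]) simp
    qed
  qed
  then obtain m where m: "\<bar>int j - 4 * int m\<bar> + \<bar>int m - 4 * int i\<bar> \<le> 3"
    by blast
  have "int (PPL_t j) \<le> int (PPL_t m) + \<bar>int j - 4 * int m\<bar>"
    using PPL_t_le_lifted_PPL[of j m] by (simp add: lifted_PPL_def)
  moreover have "int (PPL_t m) \<le> int (PPL_t i) + \<bar>int m - 4 * int i\<bar>"
    using PPL_t_le_lifted_PPL[of m i] by (simp add: lifted_PPL_def)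
  ultimately show ?thesis
    using m by linarith
qed

definition is_SP :: "nat \<Rightarrow> nat \<Rightarrow> bool" where
  "is_SP k n \<longleftrightarrow> PPL_t n = k \<and> (\<forall>j<n. PPL_t j < k)"

lemma SP_t_eqI:
  assumes "is_SP k n"
  shows "SP_t k = n"
  unfolding SP_t_def
proof (rule Least_equality)
  show "PPL_t n = k"
    using assms by (simp add: is_SP_def)
next
  fix j
  assume "PPL_t j = k"
  then show "n \<le> j"
    using assms by (auto simp: is_SP_def not_le[symmetric])
qed

lemma is_SP_step:
  assumes "0 < k" and SP: "is_SP k n"
  shows "is_SP (k + 3) (16 * n - 6)"
proof -
  have "n \<noteq> 0"
  proof
    assume "n = 0"
    then show False
      using assms PPL_t_0 by (simp add: is_SP_def)
  qed
  then obtain p where p: "n = p + 1"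
    by (metis Suc_eq_plus1 not0_implies_Suc)
  have "PPL_t p = k - 1"
    using SP PPL_t_Suc_le[of p] p by (auto simp: is_SP_def)
  then have level1: "PPL_t (4 * p + 2) = k + 1" "PPL_t (4 * p + 3) = k + 1"
    using SP p assms(1) PPL_t_4_mult_plus[of 2 p] PPL_t_4_mult_plus[of 3 p] by (auto simp: is_SP_def)
  have "PPL_t (4 * (4 * p + 2) + 2) = min (PPL_t (4 * p + 2) + 2) (PPL_t (4 * p + 2 + 1) + 4 - 2)"
    by (rule PPL_t_4_mult_plus) simp
  also have "\<dots> = k + 3"
    using level1 by (simp add: numeral_3_eq_3)
  finally have "PPL_t (4 * (4 * p + 2) + 2) = k + 3" .
  moreover have "16 * n - 6 = 4 * (4 * p + 2) + 2"
    using p by simp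
  moreover have "PPL_t j < k + 3" if "j < 16 * n - 6" for j
  proof -
    define i where "i = (j + 6) div 16"
    have "i < n"
      using that \<open>n \<noteq> 0\<close> by (simp add: i_def div_less_iff_less_mult)
    moreover have "\<bar>int j - 16 * int i\<bar> \<le> 9"
      unfolding i_def by linarith
    ultimately show ?thesis
      using PPL_t_two_levels SP unfolding is_SP_def by fastforce
  qed
  ultimately show ?thesis
    by (simp add: is_SP_def)
qed

lemma PPL_t_initial_values:
  "PPL_t 1 = 1" "PPL_t 2 = 2" "PPL_t 3 = 2" "PPL_t 4 = 1" "PPL_t 5 = 2" "PPL_t 6 = 3"
proof -
  show "PPL_t 1 = 1" "PPL_t 2 = 2" "PPL_t 3 = 2"
    using PPL_t_4_mult_plus[of 1 0] PPL_t_4_mult_plus[of 2 0] PPL_t_4_mult_plus[of 3 0] PPL_t_0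
    by (simp_all add: eval_nat_numeral)
  then show "PPL_t 4 = 1" "PPL_t 5 = 2" "PPL_t 6 = 3"
    using PPL_t_4_mult_plus[of 0 1] PPL_t_4_mult_plus[of 1 1] PPL_t_4_mult_plus[of 2 1]
    by (simp_all add: eval_nat_numeral)
qed

lemma is_SP_initial: "is_SP 1 1" "is_SP 2 2" "is_SP 3 6"
proof -
  have "j < 6 \<longleftrightarrow> j = 0 \<or> j = 1 \<or> j = 2 \<or> j = 3 \<or> j = 4 \<or> j = 5" for j :: nat
    by arith
  moreover have "j < 2 \<longleftrightarrow> j = 0 \<or> j = 1" for j :: nat
    by arith
  ultimately show "is_SP 1 1" "is_SP 2 2" "is_SP 3 6"
    unfolding is_SP_def using PPL_t_initial_values PPL_t_0 by auto
qed

lemma is_SP_exists: "0 < k \<Longrightarrow> \<exists>n. is_SP k n"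
proof (induction k rule: less_induct)
  case (less k)
  consider "k = 1" | "k = 2" | "k = 3" | "k \<ge> 4"
    using less.prems by linarith
  then show ?case
  proof cases
    case 4
    then obtain n where "is_SP (k - 3) n"
      using less.IH[of "k - 3"] by auto
    then show ?thesis
      using is_SP_step[of "k - 3" n] 4 by auto
  qed (use is_SP_initial in blast)+
qed

theorem proposition14:
  shows "SP_t 1 = 1 \<and> SP_t 2 = 2 \<and> SP_t 3 = 6 \<and>
         (\<forall>k>0. SP_t (k + 3) = 16 * SP_t k - 6)"
proof (intro conjI allI impI)
  show "SP_t 1 = 1" "SP_t 2 = 2" "SP_t 3 = 6"
    using SP_t_eqI is_SP_initial by blast+
  fix k :: nat
  assume "0 < k"
  then obtain n where "is_SP k n"
    using is_SP_exists by blast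
  then show "SP_t (k + 3) = 16 * SP_t k - 6"
    using SP_t_eqI is_SP_step[OF \<open>0 < k\<close>] by metis
qed

end
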